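(* Let $n$ be an odd positive integer and $q$ an odd prime power. Then the group $\Gamma L_1(1,q^n)=\Gamma L(1,q^n)\cap SL(n,q)$ does not act transitively on $\mathbb{F}_{q^n}\setminus\{0\}$.
   Context: Regard $\mathbb{F}_{q^n}$ as an $n$-dimensional $\mathbb{F}_q$-vector space, so $GL(n,q)=GL_{\mathbb{F}_q}(\mathbb{F}_{q^n})$. Let $\alpha$ generate $\mathbb{F}_{q^n}^*$, let $\tau(z)=\alpha z$ and $\sigma(z)=z^q$. $\Gamma L(1,q^n)$ is the subgroup of $GL(n,q)$ generated by $\tau$ and $\sigma$ (of order $n(q^n-1)$), and $\Gamma L_1(1,q^n)$ is its intersection with $SL(n,q)$. *)

theory Defs
  imports "HOL-Combinatorics.Permutations" "HOL-Computational_Algebra.Primes"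
begin

definition Fq :: "nat \<Rightarrow> 'a::field set" where
  "Fq q = {x. x ^ q = x}"

definition is_basis :: "'a::field set \<Rightarrow> nat \<Rightarrow> (nat \<Rightarrow> 'a) \<Rightarrow> bool" where
  "is_basis F n b \<longleftrightarrow>
     (\<forall>x. \<exists>!c. (\<forall>i. (i < n \<longrightarrow> c i \<in> F) \<and> (n \<le> i \<longrightarrow> c i = 0))
               \<and> x = (\<Sum>i<n. c i * b i))"

definition coords :: "'a::field set \<Rightarrow> nat \<Rightarrow> (nat \<Rightarrow> 'a) \<Rightarrow> 'a \<Rightarrow> nat \<Rightarrow> 'a" where
  "coords F n b x = (THE c. (\<forall>i. (i < n \<longrightarrow> c i \<in> F) \<and> (n \<le> i \<longrightarrow> c i = 0))
                            \<and> x = (\<Sum>i<n. c i * b i))"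

(* determinant of an F-linear map f of 'a, computed in the basis b
   (matrix entry (j,i) = j-th coordinate of f(b_i)) *)
definition det_wrt :: "'a::field set \<Rightarrow> nat \<Rightarrow> (nat \<Rightarrow> 'a) \<Rightarrow> ('a \<Rightarrow> 'a) \<Rightarrow> 'a" where
  "det_wrt F n b f =
     (\<Sum>p\<in>{p. p permutes {..<n}}. of_int (sign p) * (\<Prod>i<n. coords F n b (f (b i)) (p i)))"

definition lin_det :: "'a::field set \<Rightarrow> nat \<Rightarrow> ('a \<Rightarrow> 'a) \<Rightarrow> 'a" where
  "lin_det F n f = det_wrt F n (SOME b. is_basis F n b) f"

(* Gamma L(1,q^n): the subgroup of GL(n,q) generated by tau(z) = alpha z and
   sigma(z) = z^q.  Since the ambient group GL_{F_q}(F_{q^n}) is finite, the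
   subgroup generated equals the submonoid generated, i.e. the closure of
   {id} under post-composition with tau and sigma. *)
inductive_set GammaL :: "'a::field \<Rightarrow> nat \<Rightarrow> ('a \<Rightarrow> 'a) set"
  for \<alpha> :: "'a" and q :: nat where
  GammaL_id: "id \<in> GammaL \<alpha> q"
| GammaL_tau: "f \<in> GammaL \<alpha> q \<Longrightarrow> (\<lambda>z. \<alpha> * z) \<circ> f \<in> GammaL \<alpha> q"
| GammaL_sigma: "f \<in> GammaL \<alpha> q \<Longrightarrow> (\<lambda>z. z ^ q) \<circ> f \<in> GammaL \<alpha> q"

definition GammaL1 :: "'a::field \<Rightarrow> nat \<Rightarrow> nat \<Rightarrow> ('a \<Rightarrow> 'a) set" where
  "GammaL1 \<alpha> q n = {g \<in> GammaL \<alpha> q. lin_det (Fq q) n g = 1}"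

end

theory Submission
  imports
    Defs
    "Jordan_Normal_Form.Determinant"
    "Jordan_Normal_Form.VS_Connect"
    "HOL-Algebra.Multiplicative_Group"
    "HOL-Number_Theory.Residues"
begin

(* The F_q-determinant is multiplicative, so on Gamma L(1,q^n) it is determined by
   det tau and det sigma.  Every element of Gamma L(1,q^n) has the form z \<mapsto> c z^(q^i);
   if one of determinant 1 sends 1 to alpha, then c = alpha and det tau (det sigma)^i = 1.
   As sigma^n = 1, raising to the n-th power gives (det tau)^n = 1.  But -1 = alpha^m lies
   in F_q, so (det tau)^m = det(z \<mapsto> -z) = (-1)^n = -1 and (-1)^n = (det tau)^(m n) = 1
   contradicts -1 \<noteq> 1 in odd characteristic. *)

section \<open>Finite fields\<close>

lemma prime_CHAR_finite: "prime CHAR('a::{finite,field})"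
  by (rule prime_CHAR_semidom) (simp add: finite_imp_CHAR_pos)

lemma finite_field_power_card_minus_one:
  fixes x :: "'a::{finite,field}"
  assumes "x \<noteq> 0"
  shows "x ^ (card (UNIV :: 'a set) - 1) = 1"
proof -
  interpret units: group "mult_of (class_ring :: 'a ring)"
    by (rule field.field_mult_group[OF class_field])
  have "Coset.order (mult_of (class_ring :: 'a ring)) = card (UNIV :: 'a set) - 1"
    using field.order_mult_of[OF class_field] by (simp add: Coset.order_def)
  then show ?thesis
    using units.pow_order_eq_1[of x] assms by (simp add: nat_pow_mult_of class_ring_simps)
qed

lemma one_less_card_finite_field: "1 < card (UNIV :: 'a::{finite,field} set)"
proof -
  have "card {0, 1 :: 'a} \<le> card (UNIV :: 'a set)"
    by (rule card_mono) auto
  then show ?thesis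
    by simp
qed

lemma finite_field_power_card:
  fixes x :: "'a::{finite,field}"
  shows "x ^ card (UNIV :: 'a set) = x"
proof (cases "x = 0")
  case False
  have "card (UNIV :: 'a set) = Suc (card (UNIV :: 'a set) - 1)"
    using one_less_card_finite_field[where 'a = 'a] by simp
  then show ?thesis
    by (metis False finite_field_power_card_minus_one power_Suc mult_1_right)
qed (use one_less_card_finite_field[where 'a = 'a] in simp)

lemma CHAR_eq_prime_of_card_eq_power:
  assumes "prime p" and "card (UNIV :: 'a::{finite,field} set) = p ^ m"
  shows "CHAR('a) = p"
proof -
  have "CHAR('a) dvd p ^ m"
    using CHAR_dvd_CARD[where ?'a = 'a] assms(2) by simp
  then show ?thesis
    using assms(1) prime_CHAR_finite[where 'a = 'a] by (simp add: prime_dvd_power primes_dvd_imp_eq)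
qed

lemma minus_one_neq_one_if_CHAR_neq_2:
  assumes "prime CHAR('a::comm_ring_1)" and "CHAR('a) \<noteq> 2"
  shows "(-1 :: 'a) \<noteq> 1"
proof
  assume "(-1 :: 'a) = 1"
  then have "of_nat 2 = (0 :: 'a)"
    by (simp add: eq_neg_iff_add_eq_0)
  then have "CHAR('a) dvd 2"
    by (simp only: of_nat_eq_0_iff_char_dvd)
  then show False
    using assms primes_dvd_imp_eq two_is_prime_nat by blast
qed

section \<open>Bases of a finite field over a subfield\<close>

definition coeff_vecs :: "'a::field set \<Rightarrow> nat \<Rightarrow> (nat \<Rightarrow> 'a) set" where
  "coeff_vecs F m = {c. \<forall>i. (i < m \<longrightarrow> c i \<in> F) \<and> (m \<le> i \<longrightarrow> c i = 0)}"

definition lincomb :: "nat \<Rightarrow> (nat \<Rightarrow> 'a::field) \<Rightarrow> (nat \<Rightarrow> 'a) \<Rightarrow> 'a" where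
  "lincomb m c b = (\<Sum>i<m. c i * b i)"

lemma is_basis_iff: "is_basis F n b \<longleftrightarrow> (\<forall>x. \<exists>!c. c \<in> coeff_vecs F n \<and> x = lincomb n c b)"
  by (simp add: is_basis_def coeff_vecs_def lincomb_def)

lemma coords_eq_The: "coords F n b x = (THE c. c \<in> coeff_vecs F n \<and> x = lincomb n c b)"
  by (simp add: coords_def coeff_vecs_def lincomb_def)

lemma lincomb_Suc: "lincomb (Suc m) c b = lincomb m c b + c m * b m"
  by (simp add: lincomb_def)

lemma lincomb_cong:
  "(\<And>i. i < m \<Longrightarrow> c i = d i) \<Longrightarrow> (\<And>i. i < m \<Longrightarrow> b i = b' i) \<Longrightarrow> lincomb m c b = lincomb m d b'"
  unfolding lincomb_def by (rule sum.cong) auto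

lemma card_coeff_vecs: "card (coeff_vecs F m) = card F ^ m"
proof -
  have "bij_betw (\<lambda>c. restrict c {..<m}) (coeff_vecs F m) (PiE {..<m} (\<lambda>_. F))"
    by (rule bij_betw_byWitness[where f' = "\<lambda>d i. if i < m then d i else 0"])
       (auto simp: coeff_vecs_def PiE_def extensional_def fun_eq_iff)
  then show ?thesis
    by (simp add: bij_betw_same_card card_PiE)
qed

locale subfield_set =
  fixes F :: "'a::field set"
  assumes zero_mem: "0 \<in> F" and one_mem: "1 \<in> F"
    and add_mem: "x \<in> F \<Longrightarrow> y \<in> F \<Longrightarrow> x + y \<in> F"
    and mult_mem: "x \<in> F \<Longrightarrow> y \<in> F \<Longrightarrow> x * y \<in> F"
    and uminus_mem: "x \<in> F \<Longrightarrow> - x \<in> F"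
    and inverse_mem: "x \<in> F \<Longrightarrow> inverse x \<in> F"
begin

lemma diff_mem: "x \<in> F \<Longrightarrow> y \<in> F \<Longrightarrow> x - y \<in> F"
  using add_mem uminus_mem by (metis diff_conv_add_uminus)

definition lin_indep :: "nat \<Rightarrow> (nat \<Rightarrow> 'a) \<Rightarrow> bool" where
  "lin_indep m b \<longleftrightarrow> inj_on (\<lambda>c. lincomb m c b) (coeff_vecs F m)"

definition lin_span :: "nat \<Rightarrow> (nat \<Rightarrow> 'a) \<Rightarrow> 'a set" where
  "lin_span m b = (\<lambda>c. lincomb m c b) ` coeff_vecs F m"

lemma card_lin_span: "lin_indep m b \<Longrightarrow> card (lin_span m b) = card F ^ m"
  unfolding lin_indep_def lin_span_def by (simp add: card_image card_coeff_vecs)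

lemma lin_indep_extend:
  assumes indep: "lin_indep m b" and v: "v \<notin> lin_span m b"
  shows "lin_indep (Suc m) (b(m := v))"
  unfolding lin_indep_def
proof (rule inj_onI)
  fix c d assume c: "c \<in> coeff_vecs F (Suc m)" and d: "d \<in> coeff_vecs F (Suc m)"
    and eq: "lincomb (Suc m) c (b(m := v)) = lincomb (Suc m) d (b(m := v))"
  have c0: "c(m := 0) \<in> coeff_vecs F m" and d0: "d(m := 0) \<in> coeff_vecs F m"
    using c d by (auto simp: coeff_vecs_def)
  have split: "lincomb (Suc m) e (b(m := v)) = lincomb m (e(m := 0)) b + e m * v" for e
    unfolding lincomb_Suc by (auto intro: lincomb_cong)
  have cd_eq: "lincomb m (c(m := 0)) b - lincomb m (d(m := 0)) b = (d m - c m) * v"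
    using eq by (simp add: split algebra_simps)
  show "c = d"
  proof (cases "c m = d m")
    case True
    then have "lincomb m (c(m := 0)) b = lincomb m (d(m := 0)) b"
      using cd_eq by simp
    then have "c(m := 0) = d(m := 0)"
      using indep c0 d0 by (auto simp: lin_indep_def dest: inj_onD)
    then show ?thesis
      using True by (metis fun_upd_triv fun_upd_upd)
  next
    case False
    define e where "e = inverse (d m - c m)"
    have "e \<in> F"
      using c d by (auto simp: e_def coeff_vecs_def intro!: inverse_mem diff_mem)
    then have w: "(\<lambda>i. e * ((c(m := 0)) i - (d(m := 0)) i)) \<in> coeff_vecs F m"
      using c0 d0 by (auto simp: coeff_vecs_def intro!: mult_mem diff_mem)
    have "v = e * (lincomb m (c(m := 0)) b - lincomb m (d(m := 0)) b)"
      using cd_eq False by (simp add: e_def field_simps)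
    also have "\<dots> = lincomb m (\<lambda>i. e * ((c(m := 0)) i - (d(m := 0)) i)) b"
      by (simp add: lincomb_def sum_distrib_left algebra_simps sum_subtractf)
    finally have "v \<in> lin_span m b"
      using w unfolding lin_span_def by blast
    with v show ?thesis by blast
  qed
qed

lemma is_basis_if_lin_indep_span:
  assumes "lin_span m b = UNIV" and "lin_indep m b"
  shows "is_basis F m b"
  unfolding is_basis_iff
proof
  fix x
  obtain c where "c \<in> coeff_vecs F m" and "x = lincomb m c b"
    using assms(1) unfolding lin_span_def by (metis UNIV_I imageE)
  with assms(2) show "\<exists>!c. c \<in> coeff_vecs F m \<and> x = lincomb m c b"
    unfolding lin_indep_def by (auto dest: inj_onD)
qed

lemma exists_basis:
  assumes "finite (UNIV :: 'a set)"
  shows "\<exists>d b. is_basis F d b \<and> card (UNIV :: 'a set) = card F ^ d"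
proof -
  define S where "S = {m. \<exists>b. lin_indep m b}"
  have "m < card (UNIV :: 'a set)" if "m \<in> S" for m
  proof -
    obtain b where "lin_indep m b" using \<open>m \<in> S\<close> S_def by blast
    then have "card F ^ m \<le> card (UNIV :: 'a set)"
      using card_lin_span[of m b] card_mono[OF assms, of "lin_span m b"] by simp
    moreover have "m < 2 ^ m" by simp
    moreover have "2 ^ m \<le> card F ^ m"
      using card_mono[OF finite_subset[OF _ assms], of F "{0, 1}"] zero_mem one_mem
      by (simp add: power_mono)
    ultimately show ?thesis by linarith
  qed
  then have "finite S"
    by (meson bounded_nat_set_is_finite)
  moreover have "0 \<in> S"
    by (simp add: S_def lin_indep_def coeff_vecs_def inj_on_def fun_eq_iff)
  ultimately have "Max S \<in> S" and max: "\<And>m. m \<in> S \<Longrightarrow> m \<le> Max S"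
    by (auto intro: Max_in)
  then obtain b where b: "lin_indep (Max S) b"
    unfolding S_def by blast
  have "lin_span (Max S) b = UNIV"
  proof (rule ccontr)
    assume "lin_span (Max S) b \<noteq> UNIV"
    then obtain v where "v \<notin> lin_span (Max S) b" by blast
    then have "Suc (Max S) \<in> S"
      using lin_indep_extend[OF b] unfolding S_def by blast
    then show False
      using max by fastforce
  qed
  then have "is_basis F (Max S) b"
    using b by (rule is_basis_if_lin_indep_span)
  then show ?thesis
    using card_lin_span[OF b] \<open>lin_span (Max S) b = UNIV\<close> by metis
qed

end

section \<open>Determinants of linear maps with respect to a basis\<close>

definition F_linear :: "'a::field set \<Rightarrow> ('a \<Rightarrow> 'a) \<Rightarrow> bool" where
  "F_linear F f \<longleftrightarrow> (\<forall>x y. f (x + y) = f x + f y) \<and> (\<forall>c\<in>F. \<forall>x. f (c * x) = c * f x)"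

lemma F_linear_times: "F_linear F ((*) a)"
  by (simp add: F_linear_def algebra_simps)

lemma F_linear_lincomb:
  assumes "F_linear F f" and "\<And>i. i < m \<Longrightarrow> c i \<in> F"
  shows "f (lincomb m c v) = lincomb m c (f \<circ> v)"
  using assms(2)
proof (induction m)
  case 0
  have "f 0 = f 0 + f 0"
    using assms(1) unfolding F_linear_def by (metis add_0)
  then have "f 0 = 0"
    by (metis add_cancel_right_right)
  then show ?case
    by (simp add: lincomb_def)
next
  case (Suc m)
  then show ?case
    using assms(1) by (simp add: lincomb_Suc F_linear_def)
qed

locale subfield_basis = subfield_set F for F :: "'a::field set" +
  fixes n :: nat and b :: "nat \<Rightarrow> 'a"
  assumes basis: "is_basis F n b"
begin

abbreviation coord :: "'a \<Rightarrow> nat \<Rightarrow> 'a" where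
  "coord \<equiv> coords F n b"

lemma coord_unique: "\<exists>!c. c \<in> coeff_vecs F n \<and> x = lincomb n c b"
  using basis by (simp add: is_basis_iff)

lemma coord_mem: "coord x \<in> coeff_vecs F n"
  and lincomb_coord: "lincomb n (coord x) b = x"
  using theI'[OF coord_unique[of x]] by (auto simp: coords_eq_The)

lemma coord_lincomb: "c \<in> coeff_vecs F n \<Longrightarrow> coord (lincomb n c b) = c"
  unfolding coords_eq_The by (rule the1_equality[OF coord_unique]) auto

lemma coord_in_F: "coord x i \<in> F"
  using coord_mem[of x] zero_mem by (cases "i < n") (auto simp: coeff_vecs_def)

lemma coord_add: "coord (x + y) = (\<lambda>i. coord x i + coord y i)"
proof -
  have "(\<lambda>i. coord x i + coord y i) \<in> coeff_vecs F n"
    using coord_mem[of x] coord_mem[of y] by (auto simp: coeff_vecs_def intro: add_mem)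
  moreover have "lincomb n (\<lambda>i. coord x i + coord y i) b = x + y"
    using lincomb_coord[of x] lincomb_coord[of y] by (simp add: lincomb_def distrib_right sum.distrib)
  ultimately show ?thesis
    by (metis coord_lincomb)
qed

lemma coord_scale: "a \<in> F \<Longrightarrow> coord (a * x) = (\<lambda>i. a * coord x i)"
proof -
  assume "a \<in> F"
  then have "(\<lambda>i. a * coord x i) \<in> coeff_vecs F n"
    using coord_mem[of x] by (auto simp: coeff_vecs_def intro: mult_mem)
  moreover have "lincomb n (\<lambda>i. a * coord x i) b = a * x"
    using lincomb_coord[of x] by (simp add: lincomb_def mult.assoc flip: sum_distrib_left)
  ultimately show ?thesis
    by (metis coord_lincomb)
qed

lemma coord_lincomb_eq_sum:
  assumes "\<And>j. j < m \<Longrightarrow> c j \<in> F"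
  shows "coord (lincomb m c v) i = (\<Sum>j<m. c j * coord (v j) i)"
  using assms
proof (induction m)
  case 0
  have "coord 0 = (\<lambda>i. 0)"
    using coord_lincomb[of "\<lambda>_. 0"] zero_mem by (simp add: coeff_vecs_def lincomb_def)
  then show ?case
    by (simp add: lincomb_def)
next
  case (Suc m)
  then show ?case
    by (simp add: lincomb_Suc coord_add coord_scale)
qed

definition basis_mat :: "('a \<Rightarrow> 'a) \<Rightarrow> 'a mat" where
  "basis_mat f = mat n n (\<lambda>(i, j). coord (f (b i)) j)"

lemma basis_mat_carrier: "basis_mat f \<in> carrier_mat n n"
  by (simp add: basis_mat_def)

lemma det_wrt_eq_det: "det_wrt F n b f = det (basis_mat f)"
proof -
  have "det (basis_mat f) =
      (\<Sum>p\<in>{p. p permutes {0..<n}}. signof p * (\<Prod>i = 0..<n. basis_mat f $$ (i, p i)))"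
    by (rule det_def'[OF basis_mat_carrier])
  also have "\<dots> = (\<Sum>p\<in>{p. p permutes {..<n}}. of_int (sign p) * (\<Prod>i<n. coord (f (b i)) (p i)))"
    by (intro sum.cong prod.cong)
       (auto simp: atLeast0LessThan basis_mat_def permutes_in_image)
  finally show ?thesis
    by (simp add: det_wrt_def)
qed

lemma basis_mat_comp:
  assumes "F_linear F f"
  shows "basis_mat (f \<circ> g) = basis_mat g * basis_mat f"
proof (rule eq_matI)
  fix i k assume "i < dim_row (basis_mat g * basis_mat f)" "k < dim_col (basis_mat g * basis_mat f)"
  then have ik: "i < n" "k < n"
    by (auto simp: basis_mat_def)
  have "f (g (b i)) = lincomb n (coord (g (b i))) (f \<circ> b)"
    using F_linear_lincomb[OF assms, of n "coord (g (b i))" b] coord_in_F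
    by (simp add: lincomb_coord)
  then have "coord (f (g (b i))) k = (\<Sum>j<n. coord (g (b i)) j * coord (f (b j)) k)"
    using coord_lincomb_eq_sum coord_in_F by simp
  then show "basis_mat (f \<circ> g) $$ (i, k) = (basis_mat g * basis_mat f) $$ (i, k)"
    using ik by (simp add: basis_mat_def scalar_prod_def atLeast0LessThan)
qed (simp_all add: basis_mat_def)

lemma det_wrt_comp: "F_linear F f \<Longrightarrow> det_wrt F n b (f \<circ> g) = det_wrt F n b f * det_wrt F n b g"
  by (simp add: det_wrt_eq_det basis_mat_comp det_mult[OF basis_mat_carrier basis_mat_carrier])

lemma basis_mat_scalar:
  assumes "a \<in> F"
  shows "basis_mat ((*) a) = a \<cdot>\<^sub>m 1\<^sub>m n"
proof (rule eq_matI)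
  fix i j assume "i < dim_row (a \<cdot>\<^sub>m 1\<^sub>m n)" "j < dim_col (a \<cdot>\<^sub>m 1\<^sub>m n)"
  then have ij: "i < n" "j < n"
    by auto
  define e where "e = (\<lambda>j. if j = i then a else 0)"
  have "e \<in> coeff_vecs F n"
    using ij assms zero_mem by (auto simp: e_def coeff_vecs_def)
  moreover have "lincomb n e b = (\<Sum>j<n. if j = i then a * b j else 0)"
    unfolding lincomb_def e_def by (rule sum.cong) auto
  ultimately have "coord (a * b i) = e"
    using ij coord_lincomb[of e] by simp
  then show "basis_mat ((*) a) $$ (i, j) = (a \<cdot>\<^sub>m 1\<^sub>m n) $$ (i, j)"
    using ij by (simp add: basis_mat_def e_def)
qed (simp_all add: basis_mat_def)

lemma det_wrt_scalar: "a \<in> F \<Longrightarrow> det_wrt F n b ((*) a) = a ^ n"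
  by (simp add: det_wrt_eq_det basis_mat_scalar)

lemma det_wrt_id: "det_wrt F n b id = 1"
proof -
  have "id = (*) (1 :: 'a)"
    by auto
  then show ?thesis
    using det_wrt_scalar[OF one_mem] by simp
qed

lemma det_wrt_funpow: "F_linear F f \<Longrightarrow> det_wrt F n b (f ^^ k) = det_wrt F n b f ^ k"
proof (induction k)
  case (Suc k)
  then show ?case
    by (simp only: funpow.simps(2) power_Suc det_wrt_comp)
qed (simp add: det_wrt_id)

lemma det_wrt_times_power: "det_wrt F n b ((*) (a ^ m)) = det_wrt F n b ((*) a) ^ m"
  using det_wrt_funpow[OF F_linear_times[of F a], of m] funpow_times_power[where x = a and f = "\<lambda>_. m"]
  by simp

lemma det_wrt_times_comp_funpow_neq_1:
  assumes "odd n" and "(-1 :: 'a) \<noteq> 1" and "-1 = a ^ m"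
    and "F_linear F \<sigma>" and "\<sigma> ^^ n = id"
  shows "det_wrt F n b ((*) a \<circ> \<sigma> ^^ i) \<noteq> 1"
proof
  let ?D = "det_wrt F n b"
  assume "?D ((*) a \<circ> \<sigma> ^^ i) = 1"
  then have det_one: "?D ((*) a) * ?D \<sigma> ^ i = 1"
    by (simp add: det_wrt_comp F_linear_times det_wrt_funpow assms(4))
  have "?D \<sigma> ^ n = 1"
    using det_wrt_funpow[OF assms(4), of n] by (simp add: assms(5) det_wrt_id)
  then have "?D ((*) a) ^ n = ?D ((*) a) ^ n * (?D \<sigma> ^ n) ^ i"
    by simp
  also have "\<dots> = (?D ((*) a) * ?D \<sigma> ^ i) ^ n"
    by (simp add: power_mult_distrib mult.commute flip: power_mult)
  finally have Dn: "?D ((*) a) ^ n = 1"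
    by (simp add: det_one)
  have "-1 = ?D ((*) (-1))"
    using det_wrt_scalar[OF uminus_mem[OF one_mem]] assms(1) by simp
  also have "\<dots> = ?D ((*) a) ^ m"
    by (simp add: det_wrt_times_power assms(3))
  finally have "(-1 :: 'a) ^ n = (?D ((*) a) ^ n) ^ m"
    by (simp add: mult.commute flip: power_mult)
  then have "(-1 :: 'a) ^ n = 1"
    using Dn by simp
  with assms(1,2) show False
    by simp
qed

end

section \<open>The subfield \<open>F\<^sub>q\<close>\<close>

lemma inj_on_generator_powers:
  fixes \<alpha> :: "'a::{finite,field}"
  assumes "\<alpha> \<noteq> 0" and gen: "\<forall>x. x \<noteq> 0 \<longrightarrow> (\<exists>k. x = \<alpha> ^ k)"
  shows "inj_on (\<lambda>j. \<alpha> ^ j) {..<card (UNIV :: 'a set) - 1}"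
proof -
  define N where "N = card (UNIV :: 'a set) - 1"
  have "card (UNIV - {0 :: 'a}) = N"
    by (simp add: N_def card_Diff_singleton)
  have "N > 0"
    using one_less_card_finite_field[where 'a = 'a] by (simp add: N_def)
  have "UNIV - {0} \<subseteq> (\<lambda>j. \<alpha> ^ j) ` {..<N}"
  proof
    fix x :: 'a assume "x \<in> UNIV - {0}"
    then obtain k where "x = \<alpha> ^ k"
      using gen by auto
    also have "\<dots> = (\<alpha> ^ N) ^ (k div N) * \<alpha> ^ (k mod N)"
      by (simp flip: power_mult power_add)
    also have "\<dots> = \<alpha> ^ (k mod N)"
      using finite_field_power_card_minus_one[OF \<open>\<alpha> \<noteq> 0\<close>] by (simp add: N_def)
    finally show "x \<in> (\<lambda>j. \<alpha> ^ j) ` {..<N}"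
      using \<open>N > 0\<close> by simp
  qed
  then have "N \<le> card ((\<lambda>j. \<alpha> ^ j) ` {..<N})"
    using \<open>card (UNIV - {0}) = N\<close> by (metis card_mono finite)
  moreover have "card ((\<lambda>j. \<alpha> ^ j) ` {..<N}) \<le> N"
    using card_image_le[of "{..<N}"] by simp
  ultimately have "card ((\<lambda>j. \<alpha> ^ j) ` {..<N}) = card {..<N}"
    by simp
  then show ?thesis
    unfolding N_def by (rule eq_card_imp_inj_on[OF finite_lessThan])
qed

lemma card_Fq:
  fixes \<alpha> :: "'a::{finite,field}"
  assumes "\<alpha> \<noteq> 0" and gen: "\<forall>x. x \<noteq> 0 \<longrightarrow> (\<exists>k. x = \<alpha> ^ k)"
    and "q > 1" and "(q - 1) dvd card (UNIV :: 'a set) - 1"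
  shows "card (Fq q :: 'a set) = q"
proof (rule antisym)
  define P :: "'a poly" where "P = Polynomial.monom 1 q + [:0, -1:]"
  have "degree P = q"
    using \<open>q > 1\<close> by (simp add: P_def degree_add_eq_left degree_monom_eq)
  then have "P \<noteq> 0"
    using \<open>q > 1\<close> by auto
  moreover have "Fq q = {x :: 'a. poly P x = 0}"
    by (simp add: Fq_def P_def poly_monom)
  ultimately show "card (Fq q :: 'a set) \<le> q"
    using card_poly_roots_bound[of P] \<open>degree P = q\<close> by simp
next
  define N where "N = card (UNIV :: 'a set) - 1"
  obtain M where NM: "N = (q - 1) * M"
    using assms(4) by (auto simp: N_def)
  have "M > 0"
    using NM one_less_card_finite_field[where 'a = 'a] by (cases "M = 0") (simp_all add: N_def)
  \<comment> \<open>the powers of \<open>\<alpha>\<^sup>M\<close>, an element of order \<open>q - 1\<close>, are \<open>q - 1\<close> nonzero roots of \<open>X\<^sup>q - X\<close>\<close>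
  define G where "G = (\<lambda>j. \<alpha> ^ (j * M)) ` {..<q - 1}"
  have "inj_on (\<lambda>j. \<alpha> ^ (j * M)) {..<q - 1}"
  proof (rule inj_onI)
    fix i j assume "i \<in> {..<q - 1}" "j \<in> {..<q - 1}" "\<alpha> ^ (i * M) = \<alpha> ^ (j * M)"
    moreover have "i * M < N" "j * M < N"
      using calculation \<open>M > 0\<close> by (simp_all add: NM)
    ultimately have "i * M = j * M"
      using inj_on_generator_powers[OF assms(1,2)] by (auto simp: N_def dest: inj_onD)
    then show "i = j"
      using \<open>M > 0\<close> by simp
  qed
  then have "card G = q - 1"
    by (simp add: G_def card_image)
  moreover have "G \<subseteq> Fq q - {0}"
  proof
    fix x assume "x \<in> G"
    then obtain j where x: "x = \<alpha> ^ (j * M)"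
      by (auto simp: G_def)
    have "x ^ q = x * (\<alpha> ^ N) ^ j"
      using \<open>q > 1\<close> by (simp add: x NM power_Suc[symmetric] flip: power_mult power_add, simp add: algebra_simps)
    then show "x \<in> Fq q - {0}"
      using finite_field_power_card_minus_one[OF \<open>\<alpha> \<noteq> 0\<close>] \<open>\<alpha> \<noteq> 0\<close> by (simp add: Fq_def N_def x)
  qed
  ultimately have "card (insert 0 G) = q"
    using \<open>q > 1\<close> by (subst card_insert_disjoint) auto
  moreover have "insert 0 G \<subseteq> Fq q"
    using \<open>G \<subseteq> Fq q - {0}\<close> \<open>q > 1\<close> by (auto simp: Fq_def)
  ultimately show "q \<le> card (Fq q :: 'a set)"
    by (metis card_mono finite)
qed

lemma Fq_subfield_set:
  assumes "prime CHAR('a::field)" and "q = CHAR('a) ^ k"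
  shows "subfield_set (Fq q :: 'a set)"
proof
  have frob: "(x + y) ^ q = x ^ q + y ^ q" for x y :: 'a
    using freshmans_dream'[OF assms] .
  have "q > 0"
    using assms by (simp add: prime_gt_0_nat)
  show "0 \<in> Fq q" "1 \<in> Fq q"
    using \<open>q > 0\<close> by (simp_all add: Fq_def)
  show "x + y \<in> Fq q" if "x \<in> Fq q" "y \<in> Fq q" for x y :: 'a
    using that by (simp add: Fq_def frob)
  show "x * y \<in> Fq q" if "x \<in> Fq q" "y \<in> Fq q" for x y :: 'a
    using that by (simp add: Fq_def power_mult_distrib)
  show "inverse x \<in> Fq q" if "x \<in> Fq q" for x :: 'a
    using that by (simp add: Fq_def power_inverse)
  show "- x \<in> Fq q" if "x \<in> Fq q" for x :: 'a
  proof -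
    have "x ^ q + (- x) ^ q = 0"
      using frob[of x "- x", symmetric] \<open>q > 0\<close> by (simp add: power_0_left)
    then show ?thesis
      using that by (simp add: Fq_def eq_neg_iff_add_eq_0 add.commute)
  qed
qed

lemma F_linear_Frobenius:
  assumes "prime CHAR('a::field)" and "q = CHAR('a) ^ k"
  shows "F_linear (Fq q) (\<lambda>z::'a. z ^ q)"
  using freshmans_dream'[OF assms] by (simp add: F_linear_def Fq_def power_mult_distrib)

lemma diff_one_dvd_power_diff_one: "(q - 1) dvd (q ^ n - 1 :: nat)"
proof (cases "q = 0")
  case False
  have "(int q - 1) dvd (int q ^ n - 1)"
    by (simp add: power_diff_1_eq)
  then have "int (q - 1) dvd int (q ^ n - 1)"
    using False by (simp add: of_nat_diff Suc_leI)
  then show ?thesis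
    by (simp only: int_dvd_int_iff)
qed (simp add: power_0_left)

lemma subfield_basis_Fq:
  fixes \<alpha> :: "'a::{finite,field}"
  assumes q: "q = CHAR('a) ^ k" "k > 0" and card: "card (UNIV :: 'a set) = q ^ n"
    and "\<alpha> \<noteq> 0" and "\<forall>x. x \<noteq> 0 \<longrightarrow> (\<exists>k. x = \<alpha> ^ k)"
  shows "subfield_basis (Fq q :: 'a set) n (SOME b. is_basis (Fq q :: 'a set) n b)"
proof -
  have "q > 1"
    using q prime_CHAR_finite[where 'a = 'a] by (metis one_less_power prime_gt_1_nat)
  interpret subfield_set "Fq q :: 'a set"
    using Fq_subfield_set[OF prime_CHAR_finite q(1)] .
  have "card (Fq q :: 'a set) = q"
    using card_Fq[OF assms(4,5) \<open>q > 1\<close>] card diff_one_dvd_power_diff_one by simp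
  moreover obtain d b where "is_basis (Fq q :: 'a set) d b"
    and "card (UNIV :: 'a set) = card (Fq q :: 'a set) ^ d"
    using exists_basis[OF finite_UNIV] by blast
  ultimately have "is_basis (Fq q :: 'a set) n b"
    using card \<open>q > 1\<close> by auto
  then have "is_basis (Fq q :: 'a set) n (SOME b. is_basis (Fq q :: 'a set) n b)"
    by (rule someI[where P = "is_basis (Fq q :: 'a set) n"])
  then show ?thesis
    by unfold_locales
qed

section \<open>Non-transitivity of \<open>\<Gamma>L\<^sub>1(1, q\<^sup>n)\<close>\<close>

lemma funpow_power_eq: "(\<lambda>z::'a::monoid_mult. z ^ q) ^^ i = (\<lambda>z. z ^ (q ^ i))"
proof (induction i)
  case (Suc i)
  have "x ^ (q ^ Suc i) = (x ^ (q ^ i)) ^ q" for x :: 'a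
    by (simp add: mult.commute flip: power_mult)
  with Suc show ?case
    by (simp add: fun_eq_iff)
qed simp

lemma GammaL_normal_form: "g \<in> GammaL \<alpha> q \<Longrightarrow> \<exists>c i. g = (*) c \<circ> (\<lambda>z. z ^ q) ^^ i"
proof (induction rule: GammaL.induct)
  case GammaL_id
  show ?case
    by (intro exI[of _ 1] exI[of _ 0]) auto
next
  case (GammaL_tau f)
  then obtain c i where "f = (*) c \<circ> (\<lambda>z. z ^ q) ^^ i" by blast
  then have "(*) \<alpha> \<circ> f = (*) (\<alpha> * c) \<circ> (\<lambda>z. z ^ q) ^^ i"
    by (simp add: fun_eq_iff mult.assoc)
  then show ?case by blast
next
  case (GammaL_sigma f)
  then obtain c i where "f = (*) c \<circ> (\<lambda>z. z ^ q) ^^ i" by blast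
  then have "(\<lambda>z. z ^ q) \<circ> f = (*) (c ^ q) \<circ> (\<lambda>z. z ^ q) ^^ Suc i"
    by (simp add: fun_eq_iff power_mult_distrib)
  then show ?case by blast
qed

theorem lemma3p2:
  fixes \<alpha> :: "'a::{finite, field}" and q n :: nat
  assumes "odd n" and "n > 0"
    and "\<exists>p k. prime p \<and> k > 0 \<and> q = p ^ k" and "odd q"
    and "card (UNIV :: 'a set) = q ^ n"
    and "\<forall>x::'a. x \<noteq> 0 \<longrightarrow> (\<exists>k::nat. x = \<alpha> ^ k)"
  shows "\<not> (\<forall>x y :: 'a. x \<noteq> 0 \<longrightarrow> y \<noteq> 0 \<longrightarrow> (\<exists>g \<in> GammaL1 \<alpha> q n. g x = y))"
proof
  assume transitive: "\<forall>x y :: 'a. x \<noteq> 0 \<longrightarrow> y \<noteq> 0 \<longrightarrow> (\<exists>g \<in> GammaL1 \<alpha> q n. g x = y)"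
  obtain p k where "prime p" "k > 0" "q = p ^ k"
    using assms(3) by blast
  then have q: "q = CHAR('a) ^ k"
    using CHAR_eq_prime_of_card_eq_power[where 'a = 'a, of p "k * n"] assms(5) by (simp add: power_mult)
  with \<open>odd q\<close> \<open>k > 0\<close> have "(-1 :: 'a) \<noteq> 1"
    by (intro minus_one_neq_one_if_CHAR_neq_2 prime_CHAR_finite) auto
  obtain m where m: "-1 = \<alpha> ^ m"
    using assms(6) by force
  with \<open>-1 \<noteq> 1\<close> have "\<alpha> \<noteq> 0"
    by (cases m) auto
  interpret subfield_basis "Fq q :: 'a set" n "SOME b. is_basis (Fq q :: 'a set) n b"
    by (rule subfield_basis_Fq[OF q \<open>k > 0\<close> assms(5) \<open>\<alpha> \<noteq> 0\<close> assms(6)])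
  have "(\<lambda>z::'a. z ^ q) ^^ n = id"
    by (simp add: funpow_power_eq fun_eq_iff finite_field_power_card flip: assms(5))
  note det_neq_1 = det_wrt_times_comp_funpow_neq_1[OF \<open>odd n\<close> \<open>-1 \<noteq> 1\<close> m
      F_linear_Frobenius[OF prime_CHAR_finite q] this]
  obtain g where g: "g \<in> GammaL1 \<alpha> q n" "g 1 = \<alpha>"
    using transitive[rule_format, of 1 \<alpha>] \<open>\<alpha> \<noteq> 0\<close> by auto
  then obtain c i where "g = (*) c \<circ> (\<lambda>z. z ^ q) ^^ i"
    using GammaL_normal_form unfolding GammaL1_def by blast
  with g det_neq_1 show False
    by (simp add: GammaL1_def lin_det_def funpow_power_eq)
qed

end
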